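(* Let $\delta\in(0,1)$ and let $\mathbf a$ be given by $a_0=0$ and $a_i=\delta^i$ for $i\ge 1$. Then $f^{\mathbf a}$ satisfies the density axiom and does not satisfy the size axiom.
   Context: Graphs are finite directed graphs; $d_G(x,y)$ is the shortest directed path length from $x$ to $y$ ($\infty$ if none). For $\mathbf a\in\mathbb{R}^{\mathbb{N}}$ the linear centrality is $f^{\mathbf a}_G(i)=\sum_{k\ge 0}|\{j: d_G(j,i)=k\}|\,a_k$ (only finite distances counted). For positive integers $k,p$: a $k$-clique has $k$ nodes with arcs in both directions between every pair of distinct nodes; a directed $p$-cycle has nodes $z_0,\dots,z_{p-1}$ with arcs $z_j\to z_{j+1\bmod p}$. Let $x$ be a clique node and $y$ a cycle node. $S$ is the disjoint union of the $k$-clique and the $p$-cycle; $S_{xy}$ is $S$ plus the arcs $x\to y$ and $y\to x$. Density axiom: for every $k\ge3$ and $p=k$, $f_{S_{xy}}(x)>f_{S_{xy}}(y)$. Size axiom: for every fixed $p$ there is $k_0$ with $f_S(x)>f_S(y)$ for all $k\ge k_0$, and for every fixed $k$ there is $p_0$ with $f_S(x)<f_S(y)$ for all $p\ge p_0$. *)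

theory Defs
  imports Complex_Main "HOL-Library.Extended_Nat"
begin

definition dist :: "('v \<times> 'v) set \<Rightarrow> 'v \<Rightarrow> 'v \<Rightarrow> enat" where
  "dist E u v = (if \<exists>n. (u, v) \<in> E ^^ n then enat (LEAST n. (u, v) \<in> E ^^ n) else \<infinity>)"

definition lin_cent :: "(nat \<Rightarrow> real) \<Rightarrow> 'v set \<Rightarrow> ('v \<times> 'v) set \<Rightarrow> 'v \<Rightarrow> real" where
  "lin_cent a V E i =
     (\<Sum>k \<in> {k. \<exists>j\<in>V. dist E j i = enat k}. real (card {j\<in>V. dist E j i = enat k}) * a k)"

definition clique_nodes :: "nat \<Rightarrow> (nat + nat) set" where
  "clique_nodes k = Inl ` {..<k}"

definition cycle_nodes :: "nat \<Rightarrow> (nat + nat) set" where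
  "cycle_nodes p = Inr ` {..<p}"

definition S_nodes :: "nat \<Rightarrow> nat \<Rightarrow> (nat + nat) set" where
  "S_nodes k p = clique_nodes k \<union> cycle_nodes p"

definition S_arcs :: "nat \<Rightarrow> nat \<Rightarrow> ((nat + nat) \<times> (nat + nat)) set" where
  "S_arcs k p = {(Inl i, Inl j) | i j. i < k \<and> j < k \<and> i \<noteq> j}
              \<union> {(Inr j, Inr ((j + 1) mod p)) | j. j < p}"

definition Sxy_arcs :: "nat \<Rightarrow> nat \<Rightarrow> (nat + nat) \<Rightarrow> (nat + nat) \<Rightarrow> ((nat + nat) \<times> (nat + nat)) set" where
  "Sxy_arcs k p x y = S_arcs k p \<union> {(x, y), (y, x)}"

definition density_axiom :: "(nat \<Rightarrow> real) \<Rightarrow> bool" where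
  "density_axiom a \<longleftrightarrow>
     (\<forall>k \<ge> 3. \<forall>x \<in> clique_nodes k. \<forall>y \<in> cycle_nodes k.
        lin_cent a (S_nodes k k) (Sxy_arcs k k x y) x > lin_cent a (S_nodes k k) (Sxy_arcs k k x y) y)"

definition size_axiom :: "(nat \<Rightarrow> real) \<Rightarrow> bool" where
  "size_axiom a \<longleftrightarrow>
     (\<forall>p \<ge> 1. \<exists>k0. \<forall>k \<ge> k0. k \<ge> 1 \<longrightarrow> (\<forall>x \<in> clique_nodes k. \<forall>y \<in> cycle_nodes p.
        lin_cent a (S_nodes k p) (S_arcs k p) x > lin_cent a (S_nodes k p) (S_arcs k p) y)) \<and>
     (\<forall>k \<ge> 1. \<exists>p0. \<forall>p \<ge> p0. p \<ge> 1 \<longrightarrow> (\<forall>x \<in> clique_nodes k. \<forall>y \<in> cycle_nodes p.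
        lin_cent a (S_nodes k p) (S_arcs k p) x < lin_cent a (S_nodes k p) (S_arcs k p) y))"

end

(*
  With a = (0, delta, delta^2, ...), a clique node of S has centrality (k - 1) delta whatever p is,
  while a cycle node collects delta + ... + delta^(p-1) < delta / (1 - delta); so a clique with
  k - 1 > 1 / (1 - delta) beats every cycle, and the size axiom fails.  In S_xy with k = p the
  centrality of x exceeds that of y by (k - 1)(delta - delta^2) + delta^k - delta
  = delta ((k - 1)(1 - delta) - (1 - delta^(k-1))), which is positive for k >= 3 because
  1 - delta^n < n (1 - delta) for n >= 2.
*)
theory Submission
  imports Defs
begin

(* D is the distance to i on R and R is the set of nodes that reach i: along an arc into R,
   D drops by at most one, and nxt u is an arc along which it drops by exactly one. *)
definition dist_certificate ::
    "('v \<times> 'v) set \<Rightarrow> 'v \<Rightarrow> 'v set \<Rightarrow> ('v \<Rightarrow> nat) \<Rightarrow> ('v \<Rightarrow> 'v) \<Rightarrow> bool" where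
  "dist_certificate E i R D nxt \<longleftrightarrow>
     i \<in> R \<and> D i = 0 \<and>
     (\<forall>(u, w) \<in> E. w \<in> R \<longrightarrow> u \<in> R \<and> D u \<le> Suc (D w)) \<and>
     (\<forall>u \<in> R - {i}. (u, nxt u) \<in> E \<and> nxt u \<in> R \<and> D u = Suc (D (nxt u)))"

lemma dist_certificate_lower_bound:
  assumes "dist_certificate E i R D nxt" and "(u, i) \<in> E ^^ n"
  shows "u \<in> R \<and> D u \<le> n"
  using assms(2)
proof (induction n arbitrary: u)
  case 0
  with assms(1) show ?case by (simp add: dist_certificate_def)
next
  case (Suc n)
  then obtain w where "(u, w) \<in> E" and "(w, i) \<in> E ^^ n"
    by (blast dest: relpow_Suc_D2)
  with Suc.IH assms(1) show ?case by (fastforce simp: dist_certificate_def)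
qed

lemma dist_certificate_path:
  assumes "dist_certificate E i R D nxt" and "u \<in> R"
  shows "(u, i) \<in> E ^^ D u"
  using assms(2)
proof (induction "D u" arbitrary: u)
  case 0
  have "u = i"
  proof (rule ccontr)
    assume "u \<noteq> i"
    with assms(1) \<open>u \<in> R\<close> have "D u = Suc (D (nxt u))"
      by (simp add: dist_certificate_def)
    with "0.hyps" show False by simp
  qed
  moreover have "D u = 0" using "0.hyps" by simp
  ultimately show ?case by simp
next
  case (Suc n)
  with assms(1) have step: "(u, nxt u) \<in> E" "nxt u \<in> R" "D u = Suc (D (nxt u))"
    by (auto simp: dist_certificate_def)
  with Suc.hyps have "(nxt u, i) \<in> E ^^ D (nxt u)" by simp
  from relpow_Suc_I2[OF step(1) this] step(3) show ?case by simp
qed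

lemma dist_eq_certificate:
  assumes "dist_certificate E i R D nxt"
  shows "dist E u i = (if u \<in> R then enat (D u) else \<infinity>)"
proof (cases "u \<in> R")
  case True
  have "(LEAST n. (u, i) \<in> E ^^ n) = D u"
    using dist_certificate_path[OF assms True] dist_certificate_lower_bound[OF assms]
    by (blast intro: Least_equality)
  with dist_certificate_path[OF assms True] True show ?thesis by (auto simp: dist_def)
next
  case False
  with dist_certificate_lower_bound[OF assms] show ?thesis by (auto simp: dist_def)
qed

lemma lin_cent_eq_sum:
  assumes "finite V"
    and "\<And>j. j \<in> V \<Longrightarrow> dist E j i = (if j \<in> R then enat (D j) else \<infinity>)"
  shows "lin_cent a V E i = (\<Sum>j \<in> V \<inter> R. a (D j))"
proof -
  have finite_dist: "dist E j i = enat k \<longleftrightarrow> j \<in> R \<and> D j = k" if "j \<in> V" for j k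
    using assms(2)[OF that] by auto
  have distances: "{k. \<exists>j\<in>V. dist E j i = enat k} = D ` (V \<inter> R)"
    using finite_dist by (auto simp: image_iff)
  have fibres: "{j\<in>V. dist E j i = enat k} = {j \<in> V \<inter> R. D j = k}" for k
    using finite_dist by auto
  have "(\<Sum>j \<in> V \<inter> R. a (D j))
      = (\<Sum>k \<in> D ` (V \<inter> R). \<Sum>j \<in> {j \<in> V \<inter> R. D j = k}. a (D j))"
    by (rule sum.image_gen) (use assms(1) in simp)
  also have "\<dots> = (\<Sum>k \<in> D ` (V \<inter> R). real (card {j \<in> V \<inter> R. D j = k}) * a k)"
    by (intro sum.cong) auto
  finally show ?thesis by (simp add: lin_cent_def distances fibres)
qed

lemma lin_cent_eq_certificate:
  assumes "finite V" and "dist_certificate E i R D nxt"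
  shows "lin_cent a V E i = (\<Sum>j \<in> V \<inter> R. a (D j))"
  using assms by (simp add: lin_cent_eq_sum dist_eq_certificate)

definition cycle_steps :: "nat \<Rightarrow> nat \<Rightarrow> nat \<Rightarrow> nat" where
  "cycle_steps p j t = (if j \<le> t then t - j else t + p - j)"

lemma cycle_steps_self [simp]: "cycle_steps p t t = 0"
  by (simp add: cycle_steps_def)

lemma cycle_steps_unfold:
  assumes "j < p" and "t < p"
  shows "cycle_steps p j t = (if j = t then 0 else Suc (cycle_steps p (Suc j mod p) t))"
proof -
  have "(j + 1) mod p = (if j + 1 = p then 0 else j + 1)"
    using assms(1) by (simp add: mod_Suc)
  with assms show ?thesis by (auto simp: cycle_steps_def)
qed

lemma cycle_steps_le_Suc:
  "j < p \<Longrightarrow> t < p \<Longrightarrow> cycle_steps p j t \<le> Suc (cycle_steps p (Suc j mod p) t)"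
  by (subst cycle_steps_unfold) auto

lemma cycle_steps_Suc:
  "j < p \<Longrightarrow> t < p \<Longrightarrow> j \<noteq> t \<Longrightarrow> cycle_steps p j t = Suc (cycle_steps p (Suc j mod p) t)"
  by (subst cycle_steps_unfold) auto

lemma sum_cycle_steps:
  assumes "t < p"
  shows "(\<Sum>j<p. f (cycle_steps p j t)) = (\<Sum>d<p. f d)"
  by (rule sum.reindex_bij_witness[where i="\<lambda>d. cycle_steps p d t" and j="\<lambda>j. cycle_steps p j t"])
    (use assms in \<open>auto simp: cycle_steps_def\<close>)

lemma Inl_in_S_nodes [simp]: "Inl j \<in> S_nodes k p \<longleftrightarrow> j < k"
  and Inr_in_S_nodes [simp]: "Inr j \<in> S_nodes k p \<longleftrightarrow> j < p"
  and Inl_in_clique_nodes [simp]: "Inl j \<in> clique_nodes k \<longleftrightarrow> j < k"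
  and Inr_in_cycle_nodes [simp]: "Inr j \<in> cycle_nodes p \<longleftrightarrow> j < p"
  by (auto simp: S_nodes_def clique_nodes_def cycle_nodes_def)

lemma Inl_Inl_in_S_arcs [simp]: "(Inl i, Inl j) \<in> S_arcs k p \<longleftrightarrow> i < k \<and> j < k \<and> i \<noteq> j"
  and Inr_Inr_in_S_arcs [simp]: "(Inr i, Inr j) \<in> S_arcs k p \<longleftrightarrow> i < p \<and> j = Suc i mod p"
  and Inl_Inr_notin_S_arcs [simp]: "(Inl i, Inr j) \<notin> S_arcs k p"
  and Inr_Inl_notin_S_arcs [simp]: "(Inr i, Inl j) \<notin> S_arcs k p"
  by (auto simp: S_arcs_def)

lemma finite_S_nodes: "finite (S_nodes k p)"
  by (simp add: S_nodes_def clique_nodes_def cycle_nodes_def)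

lemma sum_S_nodes: "(\<Sum>v \<in> S_nodes k p. f v) = (\<Sum>j<k. f (Inl j)) + (\<Sum>j<p. f (Inr j))"
proof -
  have "(\<Sum>v \<in> S_nodes k p. f v) = (\<Sum>v \<in> Inl ` {..<k}. f v) + (\<Sum>v \<in> Inr ` {..<p}. f v)"
    unfolding S_nodes_def clique_nodes_def cycle_nodes_def by (rule sum.union_disjoint) auto
  then show ?thesis by (simp add: sum.reindex)
qed

lemma sum_lessThan_if_eq:
  fixes x y :: "'a::comm_ring_1"
  assumes "i < k"
  shows "(\<Sum>j<k. if j = i then x else y) = x + of_nat (k - 1) * y"
  using assms by (simp add: sum.If_cases Diff_eq[symmetric])

lemma lin_cent_S_clique:
  assumes "i < k"
  shows "lin_cent a (S_nodes k p) (S_arcs k p) (Inl i) = a 0 + real (k - 1) * a 1"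
proof -
  let ?D = "case_sum (\<lambda>j. if j = i then 0 else 1) (\<lambda>_. 0)"
  have "dist_certificate (S_arcs k p) (Inl i) (clique_nodes k) ?D (\<lambda>_. Inl i)"
    using assms by (auto simp: dist_certificate_def S_arcs_def clique_nodes_def)
  then have "lin_cent a (S_nodes k p) (S_arcs k p) (Inl i) = (\<Sum>v \<in> clique_nodes k. a (?D v))"
    using lin_cent_eq_certificate[OF finite_S_nodes] by (simp add: S_nodes_def Int_absorb1)
  also have "\<dots> = (\<Sum>j<k. if j = i then a 0 else a 1)"
    by (simp add: clique_nodes_def sum.reindex if_distrib)
  finally show ?thesis using assms by (simp add: sum_lessThan_if_eq)
qed

lemma lin_cent_S_cycle:
  assumes "t < p"
  shows "lin_cent a (S_nodes k p) (S_arcs k p) (Inr t) = (\<Sum>d<p. a d)"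
proof -
  let ?D = "case_sum (\<lambda>_. 0) (\<lambda>j. cycle_steps p j t)"
  let ?nxt = "case_sum Inl (\<lambda>j. Inr (Suc j mod p))"
  have "dist_certificate (S_arcs k p) (Inr t) (cycle_nodes p) ?D ?nxt"
    using assms
    by (auto simp: dist_certificate_def S_arcs_def cycle_nodes_def cycle_steps_le_Suc cycle_steps_Suc)
  then have "lin_cent a (S_nodes k p) (S_arcs k p) (Inr t) = (\<Sum>v \<in> cycle_nodes p. a (?D v))"
    using lin_cent_eq_certificate[OF finite_S_nodes] by (simp add: S_nodes_def Int_absorb1)
  also have "\<dots> = (\<Sum>j<p. a (cycle_steps p j t))"
    by (simp add: cycle_nodes_def sum.reindex)
  finally show ?thesis using sum_cycle_steps[OF assms] by simp
qed

lemma lin_cent_Sxy_clique: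
  assumes "i < k" and "t < p"
  shows "lin_cent a (S_nodes k p) (Sxy_arcs k p (Inl i) (Inr t)) (Inl i)
         = a 0 + real (k - 1) * a 1 + (\<Sum>d<p. a (Suc d))"
proof -
  let ?D = "case_sum (\<lambda>j. if j = i then 0 else 1) (\<lambda>j. Suc (cycle_steps p j t))"
  let ?nxt = "case_sum (\<lambda>_. Inl i) (\<lambda>j. if j = t then Inl i else Inr (Suc j mod p))"
  have "dist_certificate (Sxy_arcs k p (Inl i) (Inr t)) (Inl i) (S_nodes k p) ?D ?nxt"
    unfolding dist_certificate_def Sxy_arcs_def
    using assms by (auto simp: cycle_steps_le_Suc cycle_steps_Suc split: sum.splits)
  then have "lin_cent a (S_nodes k p) (Sxy_arcs k p (Inl i) (Inr t)) (Inl i)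
      = (\<Sum>j<k. if j = i then a 0 else a 1) + (\<Sum>j<p. a (Suc (cycle_steps p j t)))"
    by (simp add: lin_cent_eq_certificate[OF finite_S_nodes] sum_S_nodes if_distrib)
  then show ?thesis
    using assms sum_cycle_steps[OF assms(2), of "\<lambda>d. a (Suc d)"] by (simp add: sum_lessThan_if_eq)
qed

lemma lin_cent_Sxy_cycle:
  assumes "i < k" and "t < p"
  shows "lin_cent a (S_nodes k p) (Sxy_arcs k p (Inl i) (Inr t)) (Inr t)
         = a 1 + real (k - 1) * a 2 + (\<Sum>d<p. a d)"
proof -
  let ?D = "case_sum (\<lambda>j. if j = i then 1 else 2) (\<lambda>j. cycle_steps p j t)"
  let ?nxt = "case_sum (\<lambda>j. if j = i then Inr t else Inl i) (\<lambda>j. Inr (Suc j mod p))"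
  have "dist_certificate (Sxy_arcs k p (Inl i) (Inr t)) (Inr t) (S_nodes k p) ?D ?nxt"
    unfolding dist_certificate_def Sxy_arcs_def
    using assms by (auto simp: cycle_steps_le_Suc cycle_steps_Suc split: sum.splits)
  then have "lin_cent a (S_nodes k p) (Sxy_arcs k p (Inl i) (Inr t)) (Inr t)
      = (\<Sum>j<k. if j = i then a 1 else a 2) + (\<Sum>j<p. a (cycle_steps p j t))"
    by (simp add: lin_cent_eq_certificate[OF finite_S_nodes] sum_S_nodes if_distrib)
  then show ?thesis
    using assms sum_cycle_steps[OF assms(2), of a] by (simp add: sum_lessThan_if_eq)
qed

lemma density_axiom_iff:
  "density_axiom a \<longleftrightarrow> (\<forall>k\<ge>3. a 1 < real (k - 1) * (a 1 - a 2) + a k)"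
proof -
  have shift: "(\<Sum>d<k. a (Suc d)) = (\<Sum>d<k. a d) + a k - a 0" for k
    using sum.lessThan_Suc_shift[of a k] by simp
  have compare: "lin_cent a (S_nodes k k) (Sxy_arcs k k (Inl i) (Inr t)) (Inr t)
          < lin_cent a (S_nodes k k) (Sxy_arcs k k (Inl i) (Inr t)) (Inl i)
        \<longleftrightarrow> a 1 < real (k - 1) * (a 1 - a 2) + a k" if "i < k" "t < k" for i t k
    using that by (simp add: lin_cent_Sxy_clique lin_cent_Sxy_cycle shift algebra_simps)
  show ?thesis
  proof (intro iffI allI impI)
    fix k :: nat
    assume "density_axiom a" and "3 \<le> k"
    then have "lin_cent a (S_nodes k k) (Sxy_arcs k k (Inl 0) (Inr 0)) (Inr 0)
        < lin_cent a (S_nodes k k) (Sxy_arcs k k (Inl 0) (Inr 0)) (Inl 0)"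
      unfolding density_axiom_def by simp
    with \<open>3 \<le> k\<close> show "a 1 < real (k - 1) * (a 1 - a 2) + a k"
      using compare[of 0 k 0] by simp
  next
    assume "\<forall>k\<ge>3. a 1 < real (k - 1) * (a 1 - a 2) + a k"
    then show "density_axiom a"
      unfolding density_axiom_def clique_nodes_def cycle_nodes_def using compare by auto
  qed
qed

lemma not_size_axiomI:
  assumes "1 \<le> k" and "\<And>p. 1 \<le> p \<Longrightarrow> (\<Sum>d<p. a d) \<le> a 0 + real (k - 1) * a 1"
  shows "\<not> size_axiom a"
proof
  assume "size_axiom a"
  with assms(1) obtain p0 where "\<forall>p\<ge>p0. 1 \<le> p \<longrightarrow> (\<forall>x \<in> clique_nodes k. \<forall>y \<in> cycle_nodes p.
      lin_cent a (S_nodes k p) (S_arcs k p) x < lin_cent a (S_nodes k p) (S_arcs k p) y)"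
    unfolding size_axiom_def by blast
  then have "lin_cent a (S_nodes k (Suc p0)) (S_arcs k (Suc p0)) (Inl 0)
      < lin_cent a (S_nodes k (Suc p0)) (S_arcs k (Suc p0)) (Inr 0)"
    using assms(1) by simp
  then have "a 0 + real (k - 1) * a 1 < (\<Sum>d<Suc p0. a d)"
    using assms(1) by (simp add: lin_cent_S_clique lin_cent_S_cycle del: sum.lessThan_Suc)
  with assms(2)[of "Suc p0"] show False by simp
qed

lemma one_minus_power_less:
  fixes \<delta> :: real
  assumes "0 \<le> \<delta>" and "\<delta> < 1" and "2 \<le> n"
  shows "1 - \<delta> ^ n < real n * (1 - \<delta>)"
proof -
  have "(\<Sum>i<n. \<delta> ^ i) < (\<Sum>i<n. 1)"
  proof (rule sum_strict_mono_ex1)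
    show "\<forall>i\<in>{..<n}. \<delta> ^ i \<le> 1" using assms by (simp add: power_le_one)
    show "\<exists>i\<in>{..<n}. \<delta> ^ i < 1" using assms by (intro bexI[of _ 1]) auto
  qed simp
  then have "(1 - \<delta>) * (\<Sum>i<n. \<delta> ^ i) < (1 - \<delta>) * real n"
    using assms(2) by simp
  then show ?thesis by (simp add: one_diff_power_eq mult.commute)
qed

lemma sum_positive_powers_le:
  fixes \<delta> :: real
  assumes "0 \<le> \<delta>" and "\<delta> < 1"
  shows "(\<Sum>d<p. if d = 0 then 0 else \<delta> ^ d) \<le> \<delta> / (1 - \<delta>)"
proof (cases p)
  case (Suc q)
  have "(\<Sum>d<q. \<delta> ^ d) \<le> (\<Sum>d. \<delta> ^ d)"
    using assms by (intro sum_le_suminf summable_geometric) auto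
  then have "\<delta> * (\<Sum>d<q. \<delta> ^ d) \<le> \<delta> * (1 / (1 - \<delta>))"
    using assms by (intro mult_left_mono) (simp_all add: suminf_geometric)
  with Suc show ?thesis by (simp add: sum.lessThan_Suc_shift sum_distrib_left del: sum.lessThan_Suc)
qed (use assms in simp)

theorem corollary2:
  fixes \<delta> :: real and a :: "nat \<Rightarrow> real"
  assumes "0 < \<delta>" and "\<delta> < 1"
    and "\<And>i. a i = (if i = 0 then 0 else \<delta> ^ i)"
  shows "density_axiom a \<and> \<not> size_axiom a"
proof
  show "density_axiom a"
    unfolding density_axiom_iff
  proof (intro allI impI)
    fix k :: nat
    assume "3 \<le> k"
    then have "\<delta> * (1 - \<delta> ^ (k - 1)) < \<delta> * (real (k - 1) * (1 - \<delta>))"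
      using assms(1,2) one_minus_power_less[of \<delta> "k - 1"] by simp
    moreover have "\<delta> * \<delta> ^ (k - 1) = \<delta> ^ k"
      using \<open>3 \<le> k\<close> by (simp add: power_eq_if[of \<delta> k])
    ultimately show "a 1 < real (k - 1) * (a 1 - a 2) + a k"
      using \<open>3 \<le> k\<close> by (simp add: assms(3) algebra_simps power2_eq_square)
  qed
  obtain n where n: "1 / (1 - \<delta>) < real n"
    using reals_Archimedean2 by blast
  show "\<not> size_axiom a"
  proof (rule not_size_axiomI)
    have "\<delta> / (1 - \<delta>) \<le> real n * \<delta>"
      using n assms(1) mult_strict_right_mono[OF n assms(1)] by simp
    then show "(\<Sum>d<p. a d) \<le> a 0 + real (Suc n - 1) * a 1" for p
      using sum_positive_powers_le[of \<delta> p] assms by (simp add: mult.commute)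
  qed simp
qed

end
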